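(* Let $R$ be a P$v$MD and let $I$ be a proper $t$-ideal of $R$. If each minimal prime of $I$ is the radical of a $v$-finite divisorial ideal, then $I$ has only finitely many minimal ($t$-)primes.
   Context: $R$ is an integral domain with quotient field $K\neq R$. For nonzero $R$-submodules $A,B$ of $K$, $(A:B)=\{x\in K: xB\subseteq A\}$. For a nonzero fractional ideal $I$, $I_v=(R:(R:I))$ and $I_t=\bigcup\{J_v: J\subseteq I \text{ nonzero finitely generated}\}$. $I$ is divisorial if $I=I_v$ and a $t$-ideal if $I=I_t$; a $v$-finite divisorial ideal is an ideal of the form $J_v$ with $J$ finitely generated. A $t$-prime is a prime $t$-ideal; a $t$-maximal ideal is an ideal maximal among proper $t$-ideals. $R$ is a P$v$MD if $R_M$ is a valuation domain for every $t$-maximal ideal $M$. *)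

theory Defs
  imports "HOL-Computational_Algebra.Fraction_Field"
begin

text \<open>The integral domain R is the type 'a (class idom); its quotient field K is 'a fract.
  R is embedded into K via emb r = Fract r 1.\<close>

definition emb :: "'a::idom \<Rightarrow> 'a fract" where
  "emb r = Fract r 1"

definition Rset :: "'a::idom fract set" where
  "Rset = range emb"

definition colon :: "'a::idom fract set \<Rightarrow> 'a fract set \<Rightarrow> 'a fract set" where
  "colon A B = {x. \<forall>b\<in>B. x * b \<in> A}"

text \<open>v-operation: I_v = (R : (R : I)).  Since (R : S) = (R : RS), the v-closure of a
  finitely generated ideal J = RF equals vcl F.\<close>
definition vcl :: "'a::idom fract set \<Rightarrow> 'a fract set" where
  "vcl I = colon Rset (colon Rset I)"

text \<open>t-operation: union of J_v over nonzero finitely generated J \<subseteq> I (J = R F, F finite).\<close>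
definition tcl :: "'a::idom fract set \<Rightarrow> 'a fract set" where
  "tcl I = \<Union>{vcl F | F. finite F \<and> F \<subseteq> I \<and> F \<noteq> {} \<and> F \<noteq> {0}}"

definition is_ideal :: "'a::idom set \<Rightarrow> bool" where
  "is_ideal I \<longleftrightarrow> 0 \<in> I \<and> (\<forall>x\<in>I. \<forall>y\<in>I. x + y \<in> I) \<and> (\<forall>r x. x \<in> I \<longrightarrow> r * x \<in> I)"

definition is_prime_ideal :: "'a::idom set \<Rightarrow> bool" where
  "is_prime_ideal P \<longleftrightarrow> is_ideal P \<and> P \<noteq> UNIV \<and> (\<forall>a b. a * b \<in> P \<longrightarrow> a \<in> P \<or> b \<in> P)"

definition is_t_ideal :: "'a::idom set \<Rightarrow> bool" where
  "is_t_ideal I \<longleftrightarrow> is_ideal I \<and> I \<noteq> {0} \<and> tcl (emb ` I) = emb ` I"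

definition is_t_maximal :: "'a::idom set \<Rightarrow> bool" where
  "is_t_maximal M \<longleftrightarrow> is_t_ideal M \<and> M \<noteq> UNIV \<and>
     (\<forall>N. is_t_ideal N \<and> N \<noteq> UNIV \<and> M \<subseteq> N \<longrightarrow> N = M)"

definition localization :: "'a::idom set \<Rightarrow> 'a fract set" where
  "localization P = {Fract a s | a s. s \<notin> P}"

text \<open>A domain D with quotient field K is a valuation domain iff for all nonzero x in K,
  x \<in> D or x\<inverse> \<in> D.\<close>
definition valuation_subring :: "'a::idom fract set \<Rightarrow> bool" where
  "valuation_subring D \<longleftrightarrow> (\<forall>x. x \<noteq> 0 \<longrightarrow> x \<in> D \<or> inverse x \<in> D)"

definition PvMD :: "'a::idom itself \<Rightarrow> bool" where
  "PvMD _ \<longleftrightarrow> (\<forall>M::'a set. is_t_maximal M \<longrightarrow> valuation_subring (localization M))"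

definition radical :: "'a::idom set \<Rightarrow> 'a set" where
  "radical J = {x. \<exists>n. x ^ n \<in> J}"

text \<open>P is the radical of a v-finite divisorial ideal (RF)_v, F a finite subset of R
  generating a nonzero ideal; (RF)_v \<subseteq> R automatically, and is identified with its
  preimage in R.\<close>
definition rad_of_v_finite :: "'a::idom set \<Rightarrow> bool" where
  "rad_of_v_finite P \<longleftrightarrow> (\<exists>F. finite F \<and> F \<noteq> {} \<and> F \<noteq> {0} \<and>
      P = radical (emb -` vcl (emb ` F)))"

definition minimal_primes :: "'a::idom set \<Rightarrow> 'a set set" where
  "minimal_primes I = {P. is_prime_ideal P \<and> I \<subseteq> P \<and>
      (\<forall>Q. is_prime_ideal Q \<and> I \<subseteq> Q \<and> Q \<subseteq> P \<longrightarrow> Q = P)}"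

end

theory Submission
  imports Defs
begin

text \<open>
  In a P\<open>v\<close>MD the primes inside a \<open>t\<close>-maximal ideal \<open>M\<close> form a chain, so \<open>M\<close> contains
  exactly one minimal prime \<open>P\<close> of \<open>I\<close>, and every \<open>x \<in> P\<close> has a power with \<open>s x\<^sup>n \<in> I\<close> for
  some \<open>s \<notin> M\<close>. Write each minimal prime \<open>P\<close> as the radical of \<open>(F\<^sub>P)\<^sub>v\<close> with \<open>F\<^sub>P\<close> finite and
  let \<open>B\<^sub>P = {r. r x\<^sup>n \<in> I for all x \<in> F\<^sub>P and some n}\<close>. Then \<open>I\<close> together with all the \<open>B\<^sub>P\<close>
  lies in no \<open>t\<close>-maximal ideal, so some finite subset of it has \<open>v\<close>-closure \<open>R\<close>, and
  finitely many \<open>P\<^sub>1, \<dots>, P\<^sub>k\<close> suffice. A minimal prime \<open>Q\<close> different from all \<open>P\<^sub>i\<close> lies in a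
  \<open>t\<close>-maximal ideal \<open>M\<close> containing none of the \<open>F\<^sub>P\<^sub>i\<close>; then \<open>M\<close> contains \<open>I\<close> and every
  \<open>B\<^sub>P\<^sub>i\<close>, which is impossible.
\<close>

lemma emb_mult: "emb (a * b) = emb a * emb b"
  by (simp add: emb_def)

lemma emb_add: "emb (a + b) = emb a + emb b"
  by (simp add: emb_def)

lemma emb_0 [simp]: "emb 0 = 0"
  by (simp add: emb_def fract_collapse)

lemma emb_1 [simp]: "emb 1 = 1"
  by (simp add: emb_def fract_collapse)

lemma emb_eq_iff [simp]: "emb a = emb b \<longleftrightarrow> a = b"
  by (simp add: emb_def eq_fract)

lemma emb_eq_0_iff [simp]: "emb a = 0 \<longleftrightarrow> a = 0"
  using emb_eq_iff[of a 0] by simp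

lemma emb_power: "emb (a ^ n) = emb a ^ n"
  by (induct n) (simp_all add: emb_mult)

lemma emb_in_image_iff [simp]: "emb x \<in> emb ` M \<longleftrightarrow> x \<in> M"
  by (auto simp: image_iff)

lemma Rset_mult: "x \<in> Rset \<Longrightarrow> y \<in> Rset \<Longrightarrow> x * y \<in> Rset"
  unfolding Rset_def by (auto simp: emb_mult[symmetric])

lemma Rset_add: "x \<in> Rset \<Longrightarrow> y \<in> Rset \<Longrightarrow> x + y \<in> Rset"
  unfolding Rset_def by (auto simp: emb_add[symmetric])

lemma emb_in_Rset [simp]: "emb r \<in> Rset"
  unfolding Rset_def by simp

lemma one_in_Rset [simp]: "1 \<in> Rset"
  using emb_in_Rset[of 1] by simp

lemma Rset_power: "a \<in> Rset \<Longrightarrow> a ^ n \<in> Rset"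
  by (induct n) (auto intro: Rset_mult)

section \<open>The \<open>v\<close>-closure\<close>

lemma colon_antimono: "A \<subseteq> B \<Longrightarrow> colon C B \<subseteq> colon C A"
  unfolding colon_def by auto

lemma vcl_mono: "A \<subseteq> B \<Longrightarrow> vcl A \<subseteq> vcl B"
  unfolding vcl_def by (intro colon_antimono)

lemma subset_vcl: "A \<subseteq> vcl A"
  unfolding vcl_def colon_def by (auto simp: mult.commute)

lemma vcl_subset_vcl: "A \<subseteq> vcl B \<Longrightarrow> vcl A \<subseteq> vcl B"
proof -
  assume "A \<subseteq> vcl B"
  then have "colon Rset B \<subseteq> colon Rset A"
    unfolding vcl_def colon_def by (fastforce simp: mult.commute)
  then show ?thesis
    unfolding vcl_def by (rule colon_antimono)
qed

lemma zero_in_vcl: "0 \<in> vcl A"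
  unfolding vcl_def colon_def Rset_def by (auto intro: range_eqI[of _ _ 0])

lemma vcl_add: "x \<in> vcl A \<Longrightarrow> y \<in> vcl A \<Longrightarrow> x + y \<in> vcl A"
  unfolding vcl_def colon_def by (auto simp: distrib_right Rset_add)

lemma vcl_mult_Rset: "r \<in> Rset \<Longrightarrow> x \<in> vcl A \<Longrightarrow> r * x \<in> vcl A"
  unfolding vcl_def colon_def by (auto simp: Rset_mult mult.assoc mult.left_commute)

lemma vcl_subset_Rset:
  assumes "A \<subseteq> Rset"
  shows "vcl A \<subseteq> Rset"
proof
  fix x assume "x \<in> vcl A"
  moreover have "1 \<in> colon Rset A"
    using assms unfolding colon_def by auto
  ultimately have "x * 1 \<in> Rset"
    unfolding vcl_def colon_def by blast
  then show "x \<in> Rset"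
    by simp
qed

lemma mem_vcl_iff: "x \<in> vcl A \<longleftrightarrow> (\<forall>z. (\<forall>a\<in>A. z * a \<in> Rset) \<longrightarrow> z * x \<in> Rset)"
  unfolding vcl_def colon_def by (simp add: mult.commute)

lemma mult_mem_vcl_products:
  assumes x: "x \<in> vcl A" and y: "y \<in> vcl B"
  shows "x * y \<in> vcl {a * b | a b. a \<in> A \<and> b \<in> B}"
  unfolding mem_vcl_iff
proof (intro allI impI)
  fix z assume z: "\<forall>c\<in>{a * b |a b. a \<in> A \<and> b \<in> B}. z * c \<in> Rset"
  have "(z * a) * y \<in> Rset" if "a \<in> A" for a
  proof -
    have "\<forall>b\<in>B. (z * a) * b \<in> Rset"
      using z that by (auto simp: mult.assoc)
    then show ?thesis
      using y unfolding mem_vcl_iff by blast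
  qed
  then have "\<forall>a\<in>A. (z * y) * a \<in> Rset"
    by (simp add: ac_simps)
  then have "(z * y) * x \<in> Rset"
    using x unfolding mem_vcl_iff by blast
  then show "z * (x * y) \<in> Rset"
    by (simp add: ac_simps)
qed

lemma vcl_subset_vcl_of_multiples:
  assumes "\<And>c. c \<in> C \<Longrightarrow> \<exists>r\<in>Rset. \<exists>b\<in>B. c = r * b"
  shows "vcl C \<subseteq> vcl B"
proof (rule vcl_subset_vcl, rule subsetI)
  fix c assume "c \<in> C"
  then obtain r b where "r \<in> Rset" "b \<in> B" "c = r * b"
    using assms by blast
  then show "c \<in> vcl B"
    using subset_vcl vcl_mult_Rset by blast
qed

lemma mult_mem_vcl_image:
  assumes "x \<in> vcl A"
  shows "s * x \<in> vcl ((*) s ` A)"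
  unfolding mem_vcl_iff
proof (intro allI impI)
  fix z assume "\<forall>b\<in>(*) s ` A. z * b \<in> Rset"
  then have "\<forall>a\<in>A. (z * s) * a \<in> Rset"
    by (simp add: ac_simps)
  then have "(z * s) * x \<in> Rset"
    using assms unfolding mem_vcl_iff by blast
  then show "z * (s * x) \<in> Rset"
    by (simp add: ac_simps)
qed

lemma ideal_zero: "is_ideal I \<Longrightarrow> 0 \<in> I"
  unfolding is_ideal_def by blast

lemma ideal_add: "is_ideal I \<Longrightarrow> x \<in> I \<Longrightarrow> y \<in> I \<Longrightarrow> x + y \<in> I"
  unfolding is_ideal_def by blast

lemma ideal_mult_left: "is_ideal I \<Longrightarrow> x \<in> I \<Longrightarrow> r * x \<in> I"
  unfolding is_ideal_def by blast

lemma ideal_mult_right: "is_ideal I \<Longrightarrow> x \<in> I \<Longrightarrow> x * r \<in> I"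
  unfolding is_ideal_def by (metis mult.commute)

lemma ideal_eq_UNIV_if_one: "is_ideal I \<Longrightarrow> 1 \<in> I \<Longrightarrow> I = UNIV"
  using ideal_mult_right[of I 1] by auto

lemma one_notin_prime_ideal: "is_prime_ideal P \<Longrightarrow> 1 \<notin> P"
  unfolding is_prime_ideal_def using ideal_eq_UNIV_if_one by blast

lemma prime_ideal_mult_notin: "is_prime_ideal P \<Longrightarrow> a \<notin> P \<Longrightarrow> b \<notin> P \<Longrightarrow> a * b \<notin> P"
  unfolding is_prime_ideal_def by blast

lemma prime_ideal_power_imp_mem: "is_prime_ideal P \<Longrightarrow> x ^ n \<in> P \<Longrightarrow> x \<in> P"
  by (induct n) (auto simp: one_notin_prime_ideal is_prime_ideal_def)

lemma ideal_Union_chain: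
  assumes "C \<noteq> {}" and "\<And>J. J \<in> C \<Longrightarrow> is_ideal J"
    and chain: "\<And>X Y. X \<in> C \<Longrightarrow> Y \<in> C \<Longrightarrow> X \<subseteq> Y \<or> Y \<subseteq> X"
  shows "is_ideal (\<Union>C)"
  unfolding is_ideal_def
proof (intro conjI allI ballI impI)
  show "0 \<in> \<Union>C"
    using assms(1,2) ideal_zero by blast
  fix x y assume "x \<in> \<Union>C" "y \<in> \<Union>C"
  then obtain X Y where XY: "X \<in> C" "Y \<in> C" "x \<in> X" "y \<in> Y"
    by blast
  with chain consider "X \<subseteq> Y" | "Y \<subseteq> X"
    by blast
  then show "x + y \<in> \<Union>C"
    by cases (use XY assms(2) ideal_add in blast)+
next
  fix r x assume "x \<in> \<Union>C"
  then show "r * x \<in> \<Union>C"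
    using assms(2) ideal_mult_left by blast
qed

lemma prime_ideal_Inter_chain:
  assumes "D \<noteq> {}" and prime: "\<And>Q. Q \<in> D \<Longrightarrow> is_prime_ideal Q"
    and chain: "\<And>X Y. X \<in> D \<Longrightarrow> Y \<in> D \<Longrightarrow> X \<subseteq> Y \<or> Y \<subseteq> X"
  shows "is_prime_ideal (\<Inter>D)"
  unfolding is_prime_ideal_def
proof (intro conjI allI impI)
  have ideal: "is_ideal Q" if "Q \<in> D" for Q
    using prime[OF that] unfolding is_prime_ideal_def by blast
  then show "is_ideal (\<Inter>D)"
    unfolding is_ideal_def by blast
  show "\<Inter>D \<noteq> UNIV"
    using assms(1) prime one_notin_prime_ideal by blast
  fix a b assume ab: "a * b \<in> \<Inter>D"
  show "a \<in> \<Inter>D \<or> b \<in> \<Inter>D"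
  proof (rule ccontr)
    assume "\<not> (a \<in> \<Inter>D \<or> b \<in> \<Inter>D)"
    then obtain Q1 Q2 where Q: "Q1 \<in> D" "a \<notin> Q1" "Q2 \<in> D" "b \<notin> Q2"
      by blast
    with chain consider "Q1 \<subseteq> Q2" | "Q2 \<subseteq> Q1"
      by blast
    then show False
      by cases (use Q ab prime prime_ideal_mult_notin in blast)+
  qed
qed

section \<open>\<open>t\<close>-ideals and \<open>t\<close>-maximal ideals\<close>

lemma t_ideal_imp_ideal: "is_t_ideal I \<Longrightarrow> is_ideal I"
  unfolding is_t_ideal_def by blast

lemma t_ideal_obtains_nonzero:
  assumes "is_t_ideal I"
  obtains i where "i \<in> I" "i \<noteq> 0"
  using assms unfolding is_t_ideal_def is_ideal_def by blast

lemma t_ideal_vcl_subset: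
  assumes M: "is_t_ideal M" and F: "finite F" "F \<subseteq> M"
  shows "vcl (emb ` F) \<subseteq> emb ` M"
proof -
  obtain m where m: "m \<in> M" "m \<noteq> 0"
    using M by (rule t_ideal_obtains_nonzero)
  let ?F = "emb ` insert m F"
  have "vcl (emb ` F) \<subseteq> vcl ?F"
    by (intro vcl_mono) auto
  also have "\<dots> \<subseteq> tcl (emb ` M)"
    unfolding tcl_def
  proof (intro Union_upper CollectI exI conjI)
    show "vcl ?F = vcl ?F" ..
    show "finite ?F" "?F \<subseteq> emb ` M" "?F \<noteq> {}" "?F \<noteq> {0}"
      using F m by auto
  qed
  also have "\<dots> = emb ` M"
    using M unfolding is_t_ideal_def by blast
  finally show ?thesis .
qed

lemma subset_tcl:
  assumes "a \<in> A" "a \<noteq> 0"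
  shows "A \<subseteq> tcl A"
proof
  fix x assume "x \<in> A"
  have "x \<in> vcl {x, a}"
    using subset_vcl by blast
  moreover have "vcl {x, a} \<in> {vcl F | F. finite F \<and> F \<subseteq> A \<and> F \<noteq> {} \<and> F \<noteq> {0}}"
    using assms \<open>x \<in> A\<close> by auto
  ultimately show "x \<in> tcl A"
    unfolding tcl_def by blast
qed

lemma t_idealI:
  assumes "is_ideal X" "x \<in> X" "x \<noteq> 0"
    and vcl_subset: "\<And>F. finite F \<Longrightarrow> F \<subseteq> X \<Longrightarrow> vcl (emb ` F) \<subseteq> emb ` X"
  shows "is_t_ideal X"
  unfolding is_t_ideal_def
proof (intro conjI)
  show "tcl (emb ` X) = emb ` X"
  proof
    show "emb ` X \<subseteq> tcl (emb ` X)"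
      using assms by (intro subset_tcl[of "emb x"]) auto
    show "tcl (emb ` X) \<subseteq> emb ` X"
      unfolding tcl_def
    proof clarify
      fix y G assume G: "y \<in> vcl G" "finite G" "G \<subseteq> emb ` X"
      then obtain F where "F \<subseteq> X" "G = emb ` F"
        by (auto simp: subset_image_iff)
      moreover have "finite F"
        using G(2) \<open>G = emb ` F\<close> by (simp add: finite_image_iff inj_on_def)
      ultimately show "y \<in> emb ` X"
        using vcl_subset G(1) by blast
    qed
  qed
qed (use assms in auto)

lemma t_ideal_Union_chain:
  assumes C: "C \<noteq> {}" and t: "\<And>J. J \<in> C \<Longrightarrow> is_t_ideal J"
    and chain: "\<And>X Y. X \<in> C \<Longrightarrow> Y \<in> C \<Longrightarrow> X \<subseteq> Y \<or> Y \<subseteq> X"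
  shows "is_t_ideal (\<Union>C)"
proof -
  obtain J0 where J0: "J0 \<in> C"
    using C by blast
  obtain t where "t \<in> J0" "t \<noteq> 0"
    using t[OF J0] by (rule t_ideal_obtains_nonzero)
  show ?thesis
  proof (rule t_idealI)
    show "is_ideal (\<Union>C)"
      using ideal_Union_chain[OF C t_ideal_imp_ideal[OF t] chain] .
    show "t \<in> \<Union>C" "t \<noteq> 0"
      using J0 \<open>t \<in> J0\<close> \<open>t \<noteq> 0\<close> by auto
    fix F assume F: "finite F" "F \<subseteq> \<Union>C"
    obtain B where "B \<in> C" "F \<subseteq> B"
    proof (cases "F = {}")
      case False
      have "subset.chain C C"
        using chain unfolding subset_chain_def by blast
      then show thesis
        using finite_subset_Union_chain[OF F C] that by blast
    qed (use J0 that in blast)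
    then show "vcl (emb ` F) \<subseteq> emb ` \<Union>C"
      using t_ideal_vcl_subset[OF t F(1)] by blast
  qed
qed

lemma ex_t_maximal_superset:
  assumes "is_t_ideal T" "T \<noteq> UNIV"
  shows "\<exists>M. is_t_maximal M \<and> T \<subseteq> M"
proof -
  let ?A = "{N. is_t_ideal N \<and> N \<noteq> UNIV \<and> T \<subseteq> N}"
  have "\<exists>M\<in>?A. \<forall>X\<in>?A. M \<subseteq> X \<longrightarrow> X = M"
  proof (rule subset_Zorn_nonempty)
    show "?A \<noteq> {}"
      using assms by blast
    fix C assume C: "C \<noteq> {}" "subset.chain ?A C"
    then have "is_t_ideal (\<Union>C)"
      unfolding subset_chain_def by (intro t_ideal_Union_chain) auto
    moreover have "1 \<notin> \<Union>C"
      using C ideal_eq_UNIV_if_one t_ideal_imp_ideal unfolding subset_chain_def by blast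
    ultimately show "\<Union>C \<in> ?A"
      using C unfolding subset_chain_def by blast
  qed
  then obtain M where M: "M \<in> ?A" "\<forall>X\<in>?A. M \<subseteq> X \<longrightarrow> X = M"
    by blast
  then have "is_t_maximal M"
    unfolding is_t_maximal_def by auto
  with M(1) show ?thesis
    by blast
qed

text \<open>The \<open>t\<close>-ideal generated by \<open>S\<close> (provided \<open>S\<close> has a nonzero element).\<close>

definition t_span :: "'a::idom set \<Rightarrow> 'a set" where
  "t_span S = {x. \<exists>F. finite F \<and> F \<subseteq> S \<and> emb x \<in> vcl (emb ` F)}"

lemma subset_t_span: "S \<subseteq> t_span S"
proof
  fix x assume "x \<in> S"
  moreover have "emb x \<in> vcl (emb ` {x})"
    using subset_vcl by auto
  ultimately show "x \<in> t_span S"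
    unfolding t_span_def by blast
qed

lemma finite_subset_t_span:
  assumes "finite G" "G \<subseteq> t_span S"
  shows "\<exists>F. finite F \<and> F \<subseteq> S \<and> emb ` G \<subseteq> vcl (emb ` F)"
  using assms
proof (induction G rule: finite_induct)
  case empty
  show ?case by blast
next
  case (insert g G)
  then obtain F where F: "finite F" "F \<subseteq> S" "emb ` G \<subseteq> vcl (emb ` F)"
    by blast
  obtain F' where F': "finite F'" "F' \<subseteq> S" "emb g \<in> vcl (emb ` F')"
    using insert.prems unfolding t_span_def by blast
  have "vcl (emb ` F) \<subseteq> vcl (emb ` (F \<union> F'))" "vcl (emb ` F') \<subseteq> vcl (emb ` (F \<union> F'))"
    by (intro vcl_mono; blast)+
  then have "emb ` insert g G \<subseteq> vcl (emb ` (F \<union> F'))"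
    using F F' by blast
  then show ?case
    using F F' by (intro exI[of _ "F \<union> F'"]) auto
qed

lemma t_span_ideal: "is_ideal (t_span S)"
  unfolding is_ideal_def
proof (intro conjI allI ballI impI)
  show "0 \<in> t_span S"
    unfolding t_span_def using zero_in_vcl by fastforce
  fix x y assume "x \<in> t_span S" "y \<in> t_span S"
  then obtain F where F: "finite F" "F \<subseteq> S" "emb ` {x, y} \<subseteq> vcl (emb ` F)"
    using finite_subset_t_span[of "{x, y}" S] by auto
  then have "emb (x + y) \<in> vcl (emb ` F)"
    by (simp add: emb_add vcl_add)
  with F show "x + y \<in> t_span S"
    unfolding t_span_def by blast
next
  fix r x assume "x \<in> t_span S"
  then obtain F where F: "finite F" "F \<subseteq> S" "emb x \<in> vcl (emb ` F)"
    unfolding t_span_def by blast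
  then have "emb (r * x) \<in> vcl (emb ` F)"
    by (simp add: emb_mult vcl_mult_Rset)
  with F show "r * x \<in> t_span S"
    unfolding t_span_def by blast
qed

lemma t_ideal_t_span:
  assumes "s \<in> S" "s \<noteq> 0"
  shows "is_t_ideal (t_span S)"
proof (rule t_idealI[OF t_span_ideal, of s])
  show "s \<in> t_span S"
    using assms(1) subset_t_span[of S] by blast
  show "s \<noteq> 0"
    by (rule assms(2))
  fix G assume "finite G" "G \<subseteq> t_span S"
  then obtain F where F: "finite F" "F \<subseteq> S" "emb ` G \<subseteq> vcl (emb ` F)"
    using finite_subset_t_span by meson
  have "vcl (emb ` G) \<subseteq> vcl (emb ` F)"
    using F(3) by (rule vcl_subset_vcl)
  moreover have "vcl (emb ` F) \<subseteq> emb ` t_span S"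
  proof
    fix y assume y: "y \<in> vcl (emb ` F)"
    moreover have "vcl (emb ` F) \<subseteq> Rset"
      by (intro vcl_subset_Rset) auto
    ultimately obtain x where x: "y = emb x"
      unfolding Rset_def by blast
    then have "x \<in> t_span S"
      using F y unfolding t_span_def by blast
    then show "y \<in> emb ` t_span S"
      using x by simp
  qed
  ultimately show "vcl (emb ` G) \<subseteq> emb ` t_span S"
    by blast
qed

lemma t_maximal_imp_prime:
  assumes M: "is_t_maximal M"
  shows "is_prime_ideal M"
  unfolding is_prime_ideal_def
proof (intro conjI allI impI)
  have tM: "is_t_ideal M"
    using M unfolding is_t_maximal_def by blast
  then show "is_ideal M"
    by (rule t_ideal_imp_ideal)
  show "M \<noteq> UNIV"
    using M unfolding is_t_maximal_def by blast
  fix a b assume ab: "a * b \<in> M"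
  show "a \<in> M \<or> b \<in> M"
  proof (rule ccontr)
    assume "\<not> (a \<in> M \<or> b \<in> M)"
    then have a: "a \<notin> M" and b: "b \<notin> M"
      by auto
    obtain m where "m \<in> M" "m \<noteq> 0"
      using tM by (rule t_ideal_obtains_nonzero)
    then have "is_t_ideal (t_span (insert a M))"
      by (intro t_ideal_t_span[of m]) auto
    moreover have "M \<subseteq> t_span (insert a M)" "a \<in> t_span (insert a M)"
      using subset_t_span[of "insert a M"] by auto
    ultimately have "t_span (insert a M) = UNIV"
      using M a unfolding is_t_maximal_def by blast
    then have "1 \<in> t_span (insert a M)"
      by blast
    then obtain F where F: "finite F" "F \<subseteq> insert a M" "1 \<in> vcl (emb ` F)"
      unfolding t_span_def by auto
    \<comment> \<open>\<open>(F)\<^sub>v = R\<close> and \<open>bF \<subseteq> M\<close>, so \<open>b \<in> (bF)\<^sub>v \<subseteq> M\<close>.\<close>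
    have "emb b \<in> vcl ((*) (emb b) ` emb ` F)"
      using mult_mem_vcl_image[OF F(3)] by simp
    also have "(*) (emb b) ` emb ` F = emb ` ((*) b ` F)"
      by (simp add: image_image emb_mult)
    also have "vcl (emb ` ((*) b ` F)) \<subseteq> emb ` M"
    proof (rule t_ideal_vcl_subset[OF tM])
      show "(*) b ` F \<subseteq> M"
        using F(2) ab tM t_ideal_imp_ideal ideal_mult_left by (fastforce simp: mult.commute)
    qed (use F in simp)
    finally show False
      using b by simp
  qed
qed

lemma t_maximal_superset_if_no_vcl_unit:
  assumes "s \<in> S" "s \<noteq> 0"
    and "\<And>F. finite F \<Longrightarrow> F \<subseteq> S \<Longrightarrow> 1 \<notin> vcl (emb ` F)"
  shows "\<exists>M. is_t_maximal M \<and> S \<subseteq> M"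
proof -
  have "1 \<notin> t_span S"
    using assms(3) unfolding t_span_def by auto
  then obtain M where "is_t_maximal M" "t_span S \<subseteq> M"
    using ex_t_maximal_superset t_ideal_t_span[OF assms(1,2)] by blast
  then show ?thesis
    using subset_t_span by blast
qed

lemma finite_subfamily_not_in_t_maximal:
  assumes "s \<in> S" "s \<noteq> 0"
    and "\<And>M. is_t_maximal M \<Longrightarrow> \<not> S \<union> \<Union>(B ` X) \<subseteq> M"
  shows "\<exists>Y\<subseteq>X. finite Y \<and> (\<forall>M. is_t_maximal M \<longrightarrow> \<not> S \<union> \<Union>(B ` Y) \<subseteq> M)"
proof -
  obtain G where G: "finite G" "G \<subseteq> S \<union> \<Union>(B ` X)" "1 \<in> vcl (emb ` G)"
    using t_maximal_superset_if_no_vcl_unit[of s "S \<union> \<Union>(B ` X)"] assms by blast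
  obtain \<F> where \<F>: "finite \<F>" "\<F> \<subseteq> B ` X" "G - S \<subseteq> \<Union>\<F>"
    using finite_subset_Union[of "G - S" "B ` X"] G by blast
  then obtain Y where Y: "Y \<subseteq> X" "finite Y" "\<F> = B ` Y"
    using finite_subset_image[of \<F> B X] by blast
  have "\<not> S \<union> \<Union>(B ` Y) \<subseteq> M" if M: "is_t_maximal M" for M
  proof
    assume "S \<union> \<Union>(B ` Y) \<subseteq> M"
    then have "G \<subseteq> M"
      using \<F> Y by blast
    then have "vcl (emb ` G) \<subseteq> emb ` M"
      using t_ideal_vcl_subset[of M G] M G(1) unfolding is_t_maximal_def by blast
    then have "emb 1 \<in> emb ` M"
      using G(3) by auto
    then have "1 \<in> M"
      by (simp only: emb_in_image_iff)
    then show False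
      using t_maximal_imp_prime[OF M] one_notin_prime_ideal by blast
  qed
  with Y(1,2) show ?thesis
    by (intro exI[of _ Y]) simp
qed

section \<open>Minimal primes\<close>

lemma subset_Zorn_nonempty_dual:
  assumes "\<A> \<noteq> {}" and ch: "\<And>\<C>. \<C> \<noteq> {} \<Longrightarrow> subset.chain \<A> \<C> \<Longrightarrow> \<Inter>\<C> \<in> \<A>"
  shows "\<exists>M\<in>\<A>. \<forall>X\<in>\<A>. X \<subseteq> M \<longrightarrow> X = M"
proof -
  have "\<exists>M\<in>uminus ` \<A>. \<forall>X\<in>uminus ` \<A>. M \<subseteq> X \<longrightarrow> X = M"
  proof (rule subset_Zorn_nonempty)
    show "uminus ` \<A> \<noteq> {}"
      using assms(1) by blast
    fix \<C> assume \<C>: "\<C> \<noteq> {}" "subset.chain (uminus ` \<A>) \<C>"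
    have "uminus ` \<C> \<subseteq> \<A>"
      using \<C>(2) unfolding subset_chain_def by auto
    moreover have "\<forall>X\<in>uminus ` \<C>. \<forall>Y\<in>uminus ` \<C>. X \<subseteq> Y \<or> Y \<subseteq> X"
      using \<C>(2) unfolding subset_chain_def by auto
    ultimately have "\<Inter>(uminus ` \<C>) \<in> \<A>"
      using \<C>(1) by (intro ch) (auto simp: subset_chain_def)
    moreover have "\<Union>\<C> = - \<Inter>(uminus ` \<C>)"
      by auto
    ultimately show "\<Union>\<C> \<in> uminus ` \<A>"
      by blast
  qed
  then obtain M where M: "M \<in> uminus ` \<A>" "\<forall>X\<in>uminus ` \<A>. M \<subseteq> X \<longrightarrow> X = M"
    by blast
  show ?thesis
  proof (intro bexI ballI impI)
    show "- M \<in> \<A>"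
      using M(1) by auto
    fix X assume "X \<in> \<A>" "X \<subseteq> - M"
    then have "- X \<in> uminus ` \<A>" "M \<subseteq> - X"
      by auto
    then show "X = - M"
      using M(2) by auto
  qed
qed

lemma ideal_add_multiples: "is_ideal Q \<Longrightarrow> is_ideal {q + r * c | q r. q \<in> Q}"
  unfolding is_ideal_def
proof (intro conjI allI ballI impI)
  assume Q: "0 \<in> Q \<and> (\<forall>x\<in>Q. \<forall>y\<in>Q. x + y \<in> Q) \<and> (\<forall>r x. x \<in> Q \<longrightarrow> r * x \<in> Q)"
  show "0 \<in> {q + r * c | q r. q \<in> Q}"
    using Q by (auto intro: exI[of _ 0])
  fix x y assume "x \<in> {q + r * c | q r. q \<in> Q}" "y \<in> {q + r * c | q r. q \<in> Q}"
  then obtain q1 r1 q2 r2 where q: "x = q1 + r1 * c" "y = q2 + r2 * c" "q1 \<in> Q" "q2 \<in> Q"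
    by blast
  then have "x + y = (q1 + q2) + (r1 + r2) * c"
    by (simp add: algebra_simps)
  moreover have "q1 + q2 \<in> Q"
    using Q q by blast
  ultimately show "x + y \<in> {q + r * c | q r. q \<in> Q}"
    by blast
next
  fix s x
  assume Q: "0 \<in> Q \<and> (\<forall>x\<in>Q. \<forall>y\<in>Q. x + y \<in> Q) \<and> (\<forall>r x. x \<in> Q \<longrightarrow> r * x \<in> Q)"
    and "x \<in> {q + r * c | q r. q \<in> Q}"
  then obtain q r where q: "x = q + r * c" "q \<in> Q"
    by blast
  then have "s * x = s * q + (s * r) * c"
    by (simp add: algebra_simps)
  moreover have "s * q \<in> Q"
    using Q q by blast
  ultimately show "s * x \<in> {q + r * c | q r. q \<in> Q}"
    by blast
qed

lemma maximal_disjoint_ideal_imp_prime: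
  assumes Q: "is_ideal Q" and S: "1 \<in> S" "\<And>a b. a \<in> S \<Longrightarrow> b \<in> S \<Longrightarrow> a * b \<in> S"
    and disj: "Q \<inter> S = {}"
    and max: "\<And>J. is_ideal J \<Longrightarrow> Q \<subseteq> J \<Longrightarrow> J \<inter> S = {} \<Longrightarrow> J = Q"
  shows "is_prime_ideal Q"
  unfolding is_prime_ideal_def
proof (intro conjI allI impI)
  show "is_ideal Q" "Q \<noteq> UNIV"
    using Q S disj by auto
  have meets: "\<exists>q\<in>Q. \<exists>r. q + r * c \<in> S" if "c \<notin> Q" for c
  proof (rule ccontr)
    let ?J = "{q + r * c | q r. q \<in> Q}"
    assume "\<not> ?thesis"
    then have "?J \<inter> S = {}"
      by blast
    moreover have "Q \<subseteq> ?J"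
      by (force intro: exI[of _ 0])
    ultimately have "?J = Q"
      using max ideal_add_multiples[OF Q] by blast
    moreover have "0 + 1 * c \<in> ?J"
      using ideal_zero[OF Q] by blast
    ultimately show False
      using that by simp
  qed
  fix a b assume ab: "a * b \<in> Q"
  show "a \<in> Q \<or> b \<in> Q"
  proof (rule ccontr)
    assume "\<not> (a \<in> Q \<or> b \<in> Q)"
    then obtain q1 r1 q2 r2 where q: "q1 \<in> Q" "q1 + r1 * a \<in> S" "q2 \<in> Q" "q2 + r2 * b \<in> S"
      using meets by meson
    have "(q1 + r1 * a) * (q2 + r2 * b) = q1 * (q2 + r2 * b) + (r1 * q2) * a + (r1 * r2) * (a * b)"
      by (simp add: algebra_simps)
    also have "\<dots> \<in> Q"
      using ideal_mult_right[OF Q q(1)] ideal_mult_right[OF Q ideal_mult_left[OF Q q(3)]]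
        ideal_mult_left[OF Q ab] by (intro ideal_add[OF Q]) simp_all
    finally show False
      using S(2) q disj by blast
  qed
qed

lemma ex_prime_ideal_disjoint_multiplicative:
  assumes I: "is_ideal I" and S: "1 \<in> S" "\<And>a b. a \<in> S \<Longrightarrow> b \<in> S \<Longrightarrow> a * b \<in> S"
    and disj: "I \<inter> S = {}"
  shows "\<exists>Q. is_prime_ideal Q \<and> I \<subseteq> Q \<and> Q \<inter> S = {}"
proof -
  let ?A = "{J. is_ideal J \<and> I \<subseteq> J \<and> J \<inter> S = {}}"
  have "\<exists>Q\<in>?A. \<forall>X\<in>?A. Q \<subseteq> X \<longrightarrow> X = Q"
  proof (rule subset_Zorn_nonempty)
    show "?A \<noteq> {}"
      using I disj by blast
    fix C assume C: "C \<noteq> {}" "subset.chain ?A C"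
    then have "is_ideal (\<Union>C)"
      unfolding subset_chain_def by (intro ideal_Union_chain) auto
    with C show "\<Union>C \<in> ?A"
      unfolding subset_chain_def by blast
  qed
  then obtain Q where "Q \<in> ?A" "\<forall>X\<in>?A. Q \<subseteq> X \<longrightarrow> X = Q"
    by blast
  then have "is_prime_ideal Q"
    by (intro maximal_disjoint_ideal_imp_prime[OF _ S]) auto
  then show ?thesis
    using \<open>Q \<in> ?A\<close> by blast
qed

lemma ex_minimal_prime_below:
  assumes "is_prime_ideal P" "I \<subseteq> P"
  shows "\<exists>Q\<in>minimal_primes I. Q \<subseteq> P"
proof -
  let ?A = "{Q. is_prime_ideal Q \<and> I \<subseteq> Q \<and> Q \<subseteq> P}"
  have "\<exists>Q\<in>?A. \<forall>X\<in>?A. X \<subseteq> Q \<longrightarrow> X = Q"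
  proof (rule subset_Zorn_nonempty_dual)
    show "?A \<noteq> {}"
      using assms by blast
    fix C assume C: "C \<noteq> {}" "subset.chain ?A C"
    then have "is_prime_ideal (\<Inter>C)"
      unfolding subset_chain_def by (intro prime_ideal_Inter_chain) auto
    with C show "\<Inter>C \<in> ?A"
      unfolding subset_chain_def by blast
  qed
  then obtain Q where Q: "Q \<in> ?A" "\<forall>X\<in>?A. X \<subseteq> Q \<longrightarrow> X = Q"
    by blast
  have "Q \<in> minimal_primes I"
    unfolding minimal_primes_def
  proof (intro CollectI conjI allI impI)
    show "is_prime_ideal Q" "I \<subseteq> Q"
      using Q(1) by auto
    fix Q' assume Q': "is_prime_ideal Q' \<and> I \<subseteq> Q' \<and> Q' \<subseteq> Q"
    then have "Q' \<in> ?A"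
      using Q(1) by auto
    then show "Q' = Q"
      using Q(2) Q' by blast
  qed
  with Q(1) show ?thesis
    by blast
qed

lemma minimal_primes_subset_imp_eq:
  "P \<in> minimal_primes I \<Longrightarrow> Q \<in> minimal_primes I \<Longrightarrow> P \<subseteq> Q \<Longrightarrow> P = Q"
  unfolding minimal_primes_def by blast

lemma ex_prime_avoiding_powers:
  assumes I: "is_ideal I" and N: "is_prime_ideal N" "I \<subseteq> N"
    and no_multiple: "\<not> (\<exists>s n. s \<notin> N \<and> s * x ^ n \<in> I)"
  shows "\<exists>Q. is_prime_ideal Q \<and> I \<subseteq> Q \<and> Q \<subseteq> N \<and> x \<notin> Q"
proof -
  let ?S = "{s * x ^ n | s n. s \<notin> N}"
  have one: "1 \<notin> N"
    using N(1) by (rule one_notin_prime_ideal)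
  have "1 * x ^ 0 \<in> ?S"
    using one by blast
  moreover have "a * b \<in> ?S" if a: "a \<in> ?S" and b: "b \<in> ?S" for a b
  proof -
    obtain s n t m where st: "a = s * x ^ n" "b = t * x ^ m" "s \<notin> N" "t \<notin> N"
      using a b by blast
    then have "a * b = (s * t) * x ^ (n + m)"
      by (simp add: power_add algebra_simps)
    then show ?thesis
      using prime_ideal_mult_notin[OF N(1) st(3,4)] by blast
  qed
  moreover have "I \<inter> ?S = {}"
    using no_multiple by blast
  ultimately obtain Q where Q: "is_prime_ideal Q" "I \<subseteq> Q" "Q \<inter> ?S = {}"
    using ex_prime_ideal_disjoint_multiplicative[OF I, of ?S] by auto
  have "q * x ^ 0 \<in> ?S" if "q \<notin> N" for q
    using that by blast
  then have "Q \<subseteq> N"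
    using Q(3) by auto
  moreover have "1 * x ^ 1 \<in> ?S"
    using one by blast
  then have "x \<notin> Q"
    using Q(3) by auto
  ultimately show ?thesis
    using Q by blast
qed

definition power_colon :: "'a::idom set \<Rightarrow> 'a set \<Rightarrow> 'a set" where
  "power_colon I F = {r. \<exists>n. \<forall>x\<in>F. r * x ^ n \<in> I}"

lemma power_colon_not_subset_prime_if_each:
  assumes N: "is_prime_ideal N" and I: "is_ideal I" and "finite F"
    and each: "\<And>x. x \<in> F \<Longrightarrow> \<exists>s n. s \<notin> N \<and> s * x ^ n \<in> I"
  shows "\<not> power_colon I F \<subseteq> N"
  unfolding power_colon_def using \<open>finite F\<close> each
proof (induction F rule: finite_induct)
  case empty
  show ?case
    using one_notin_prime_ideal[OF N] by blast
next
  case (insert y F)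
  then obtain s n where s: "s \<notin> N" "\<forall>x\<in>F. s * x ^ n \<in> I"
    by blast
  obtain t m where t: "t \<notin> N" "t * y ^ m \<in> I"
    using insert.prems by blast
  have "(s * t) * x ^ (n + m) \<in> I" if "x \<in> insert y F" for x
  proof (cases "x = y")
    case True
    have eq: "(s * t) * x ^ (n + m) = (s * x ^ n) * (t * y ^ m)"
      using True by (simp add: power_add algebra_simps)
    show ?thesis
      unfolding eq by (rule ideal_mult_left[OF I t(2)])
  next
    case False
    have eq: "(s * t) * x ^ (n + m) = (s * x ^ n) * (t * x ^ m)"
      by (simp add: power_add algebra_simps)
    have "s * x ^ n \<in> I"
      using False that s by blast
    then show ?thesis
      unfolding eq by (rule ideal_mult_right[OF I])
  qed
  then show ?case
    using prime_ideal_mult_notin[OF N s(1) t(1)] by blast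
qed

lemma power_colon_not_subset_prime:
  assumes I: "is_ideal I" and N: "is_prime_ideal N"
    and P: "P \<in> minimal_primes I" "P \<subseteq> N"
    and unique: "\<And>Q. Q \<in> minimal_primes I \<Longrightarrow> Q \<subseteq> N \<Longrightarrow> Q = P"
    and F: "finite F" "F \<subseteq> P"
  shows "\<not> power_colon I F \<subseteq> N"
proof (rule power_colon_not_subset_prime_if_each[OF N I F(1)])
  fix x assume "x \<in> F"
  show "\<exists>s n. s \<notin> N \<and> s * x ^ n \<in> I"
  proof (rule ccontr)
    assume "\<not> ?thesis"
    moreover have "I \<subseteq> N"
      using P unfolding minimal_primes_def by blast
    ultimately obtain Q where Q: "is_prime_ideal Q" "I \<subseteq> Q" "Q \<subseteq> N" "x \<notin> Q"
      using ex_prime_avoiding_powers[OF I N] by blast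
    then obtain P' where "P' \<in> minimal_primes I" "P' \<subseteq> Q"
      using ex_minimal_prime_below by blast
    with Q unique have "P \<subseteq> Q"
      by blast
    then show False
      using Q(4) \<open>x \<in> F\<close> F(2) by blast
  qed
qed

lemma power_colon_subset_prime:
  assumes N: "is_prime_ideal N" and "I \<subseteq> N" "\<not> F \<subseteq> N"
  shows "power_colon I F \<subseteq> N"
proof
  fix r assume "r \<in> power_colon I F"
  then obtain n where n: "\<forall>x\<in>F. r * x ^ n \<in> I"
    unfolding power_colon_def by blast
  obtain x where "x \<in> F" "x \<notin> N"
    using assms(3) by blast
  then show "r \<in> N"
    using n assms(2) prime_ideal_power_imp_mem[OF N] prime_ideal_mult_notin[OF N] by blast
qed

section \<open>Minimal primes inside \<open>t\<close>-maximal ideals of a P\<open>v\<close>MD\<close>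

lemma Fract_mem_localization_imp_mem:
  assumes "Fract a b \<in> localization M" "b \<noteq> 0"
    and P: "is_prime_ideal P" "b \<in> P" "P \<subseteq> M"
  shows "a \<in> P"
proof -
  obtain c s where cs: "Fract a b = Fract c s" "s \<notin> M"
    using assms(1) unfolding localization_def by blast
  have "s \<noteq> 0"
    using cs(2) P ideal_zero unfolding is_prime_ideal_def by blast
  then have "a * s = c * b"
    using cs(1) eq_fract(1)[OF assms(2)] by blast
  moreover have "c * b \<in> P"
    using P ideal_mult_left unfolding is_prime_ideal_def by blast
  ultimately have "a * s \<in> P"
    by simp
  moreover have "s \<notin> P"
    using cs(2) P(3) by blast
  ultimately show ?thesis
    using P(1) unfolding is_prime_ideal_def by blast
qed

lemma PvMD_primes_below_t_maximal_chain:
  assumes pv: "PvMD TYPE('a::idom)" and M: "is_t_maximal (M::'a set)"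
    and P1: "is_prime_ideal P1" "P1 \<subseteq> M" and P2: "is_prime_ideal P2" "P2 \<subseteq> M"
  shows "P1 \<subseteq> P2 \<or> P2 \<subseteq> P1"
proof (rule ccontr)
  assume "\<not> (P1 \<subseteq> P2 \<or> P2 \<subseteq> P1)"
  then obtain a b where ab: "a \<in> P1" "a \<notin> P2" "b \<in> P2" "b \<notin> P1"
    by blast
  have "a \<noteq> 0" "b \<noteq> 0"
    using ab P1(1) P2(1) ideal_zero unfolding is_prime_ideal_def by blast+
  then have "Fract a b \<noteq> 0"
    by (simp add: Zero_fract_def eq_fract)
  moreover have "valuation_subring (localization M)"
    using pv M unfolding PvMD_def by blast
  ultimately have "Fract a b \<in> localization M \<or> Fract b a \<in> localization M"
    unfolding valuation_subring_def by (metis inverse_fract)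
  then show False
    using Fract_mem_localization_imp_mem[OF _ \<open>b \<noteq> 0\<close> P2(1) ab(3) P2(2)]
      Fract_mem_localization_imp_mem[OF _ \<open>a \<noteq> 0\<close> P1(1) ab(1) P1(2)] ab by blast
qed

lemma PvMD_minimal_prime_below_t_maximal_unique:
  assumes pv: "PvMD TYPE('a::idom)" and M: "is_t_maximal (M::'a set)"
    and P: "P \<in> minimal_primes I" "P \<subseteq> M" and Q: "Q \<in> minimal_primes I" "Q \<subseteq> M"
  shows "P = Q"
  using PvMD_primes_below_t_maximal_chain[OF pv M, of P Q] P Q minimal_primes_subset_imp_eq
  unfolding minimal_primes_def by blast

lemma PvMD_power_colon_not_subset_t_maximal:
  assumes pv: "PvMD TYPE('a::idom)" and I: "is_ideal (I::'a set)" and M: "is_t_maximal M"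
    and P: "P \<in> minimal_primes I" "P \<subseteq> M" and F: "finite F" "F \<subseteq> P"
  shows "\<not> power_colon I F \<subseteq> M"
proof (rule power_colon_not_subset_prime[OF I t_maximal_imp_prime[OF M] P _ F])
  fix Q assume "Q \<in> minimal_primes I" "Q \<subseteq> M"
  then show "Q = P"
    using PvMD_minimal_prime_below_t_maximal_unique[OF pv M _ _ P] by blast
qed

lemma PvMD_power_colon_subset_t_maximal:
  assumes pv: "PvMD TYPE('a::idom)" and M: "is_t_maximal (M::'a set)"
    and P: "P \<in> minimal_primes I" and Q: "Q \<in> minimal_primes I" "Q \<subseteq> M" "P \<noteq> Q"
    and generators: "F \<subseteq> M \<Longrightarrow> P \<subseteq> M"
  shows "power_colon I F \<subseteq> M"
proof (rule power_colon_subset_prime[OF t_maximal_imp_prime[OF M]])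
  show "I \<subseteq> M"
    using Q unfolding minimal_primes_def by blast
  show "\<not> F \<subseteq> M"
    using generators PvMD_minimal_prime_below_t_maximal_unique[OF pv M P _ Q(1,2)] Q(3) by blast
qed

section \<open>Generators of the unit \<open>v\<close>-ideal\<close>

lemma vcl_unit_power_generator:
  assumes A: "A \<subseteq> Rset" and a: "a \<in> Rset" and one: "1 \<in> vcl (insert a A)"
  shows "1 \<in> vcl (insert (a ^ N) A)"
proof (induct N)
  case 0
  show ?case
    using subset_vcl[of "insert 1 A"] by simp
next
  case (Suc N)
  let ?B = "insert (a ^ Suc N) A"
  have "1 * 1 \<in> vcl {x * y | x y. x \<in> insert (a ^ N) A \<and> y \<in> insert a A}"
    using mult_mem_vcl_products[OF Suc one] .
  also have "vcl {x * y | x y. x \<in> insert (a ^ N) A \<and> y \<in> insert a A} \<subseteq> vcl ?B"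
  proof (rule vcl_subset_vcl_of_multiples, clarify)
    fix x y assume x: "x \<in> insert (a ^ N) A" and y: "y \<in> insert a A"
    have "x \<in> Rset"
      using x A Rset_power[OF a] by blast
    consider "y \<in> A" | "y = a" "x = a ^ N" | "y = a" "x \<in> A"
      using x y by blast
    then show "\<exists>r\<in>Rset. \<exists>b\<in>?B. x * y = r * b"
    proof cases
      case 2
      then have "x * y = 1 * a ^ Suc N"
        by (simp add: power_Suc2)
      then show ?thesis
        using one_in_Rset by blast
    qed (use \<open>x \<in> Rset\<close> a in \<open>auto simp: mult.commute\<close>)
  qed
  finally show ?case
    by simp
qed

lemma vcl_unit_power_generators:
  assumes "finite G" "G \<union> H \<subseteq> Rset" "1 \<in> vcl (G \<union> H)"
  shows "1 \<in> vcl ((\<lambda>x. x ^ N) ` G \<union> H)"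
  using assms
proof (induction G arbitrary: H rule: finite_induct)
  case empty
  then show ?case by simp
next
  case (insert g G)
  then have "1 \<in> vcl (insert (g ^ N) (G \<union> H))"
    by (intro vcl_unit_power_generator) auto
  then have "1 \<in> vcl (G \<union> insert (g ^ N) H)"
    by simp
  moreover have "G \<union> insert (g ^ N) H \<subseteq> Rset"
    using insert.prems(1) Rset_power by auto
  ultimately have "1 \<in> vcl ((\<lambda>x. x ^ N) ` G \<union> insert (g ^ N) H)"
    using insert.IH by blast
  then show ?case
    by simp
qed

lemma power_colon_subset_t_ideal:
  assumes I: "is_t_ideal I" and G: "finite G" and one: "1 \<in> vcl (emb ` G)"
  shows "power_colon I G \<subseteq> I"
proof
  fix s assume "s \<in> power_colon I G"
  then obtain n where n: "\<forall>x\<in>G. s * x ^ n \<in> I"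
    unfolding power_colon_def by blast
  have "1 \<in> vcl ((\<lambda>x. x ^ n) ` emb ` G \<union> {})"
    using vcl_unit_power_generators[of "emb ` G" "{}" n] G one unfolding Rset_def by auto
  also have "(\<lambda>x. x ^ n) ` emb ` G \<union> {} = emb ` (\<lambda>x. x ^ n) ` G"
    by (simp add: image_image emb_power)
  finally have "emb s * 1 \<in> vcl ((*) (emb s) ` emb ` (\<lambda>x. x ^ n) ` G)"
    by (rule mult_mem_vcl_image)
  also have "(*) (emb s) ` emb ` (\<lambda>x. x ^ n) ` G = emb ` (\<lambda>x. s * x ^ n) ` G"
    by (simp add: image_image emb_mult)
  also have "vcl (emb ` (\<lambda>x. s * x ^ n) ` G) \<subseteq> emb ` I"
    using n G by (intro t_ideal_vcl_subset[OF I]) auto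
  finally show "s \<in> I"
    by simp
qed

lemma minimal_prime_subset_t_maximal:
  assumes I: "is_t_ideal I" and Q: "Q \<in> minimal_primes I"
  shows "\<exists>M. is_t_maximal M \<and> Q \<subseteq> M"
proof -
  have Qp: "is_prime_ideal Q" and IQ: "I \<subseteq> Q"
    using Q unfolding minimal_primes_def by blast+
  obtain i where "i \<in> I" "i \<noteq> 0"
    using I by (rule t_ideal_obtains_nonzero)
  show ?thesis
  proof (rule t_maximal_superset_if_no_vcl_unit)
    show "i \<in> Q" "i \<noteq> 0"
      using \<open>i \<in> I\<close> \<open>i \<noteq> 0\<close> IQ by auto
    fix G assume G: "finite G" "G \<subseteq> Q"
    have "\<not> power_colon I G \<subseteq> Q"
      using Q G minimal_primes_subset_imp_eq
      by (intro power_colon_not_subset_prime[OF t_ideal_imp_ideal[OF I] Qp]) auto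
    then show "1 \<notin> vcl (emb ` G)"
      using power_colon_subset_t_ideal[OF I G(1)] IQ by blast
  qed
qed

lemma rad_of_v_finite_generators:
  assumes "rad_of_v_finite P"
  shows "\<exists>F. finite F \<and> F \<subseteq> P \<and> (\<forall>M. is_t_maximal M \<and> F \<subseteq> M \<longrightarrow> P \<subseteq> M)"
proof -
  obtain F where F: "finite F" "P = radical (emb -` vcl (emb ` F))"
    using assms unfolding rad_of_v_finite_def by blast
  have "F \<subseteq> P"
  proof
    fix x assume "x \<in> F"
    then have "emb (x ^ 1) \<in> vcl (emb ` F)"
      using subset_vcl[of "emb ` F"] by auto
    then show "x \<in> P"
      unfolding F(2) radical_def by blast
  qed
  moreover have "P \<subseteq> M" if M: "is_t_maximal M" "F \<subseteq> M" for M
  proof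
    fix x assume "x \<in> P"
    then obtain n where "emb (x ^ n) \<in> vcl (emb ` F)"
      unfolding F(2) radical_def by auto
    moreover have "vcl (emb ` F) \<subseteq> emb ` M"
      using t_ideal_vcl_subset[of M F] M F(1) unfolding is_t_maximal_def by blast
    ultimately have "emb (x ^ n) \<in> emb ` M"
      by blast
    then show "x \<in> M"
      using prime_ideal_power_imp_mem[OF t_maximal_imp_prime[OF M(1)]] by simp
  qed
  ultimately show ?thesis
    using F(1) by blast
qed

theorem proposition1p4:
  fixes I :: "'a::idom set"
  assumes notfield: "\<exists>x::'a fract. x \<notin> Rset"
    and pvmd: "PvMD TYPE('a)"
    and tI: "is_t_ideal I"
    and proper: "I \<noteq> UNIV"
    and hyp: "\<forall>P\<in>minimal_primes I. rad_of_v_finite P"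
  shows "finite (minimal_primes I)"
proof -
  have I: "is_ideal I"
    using tI by (rule t_ideal_imp_ideal)
  obtain i where "i \<in> I" "i \<noteq> 0"
    using tI by (rule t_ideal_obtains_nonzero)
  have "\<forall>P\<in>minimal_primes I. \<exists>F. finite F \<and> F \<subseteq> P \<and>
      (\<forall>M. is_t_maximal M \<and> F \<subseteq> M \<longrightarrow> P \<subseteq> M)"
    using hyp rad_of_v_finite_generators by blast
  then obtain F where F: "\<forall>P\<in>minimal_primes I. finite (F P) \<and> F P \<subseteq> P \<and>
      (\<forall>M. is_t_maximal M \<and> F P \<subseteq> M \<longrightarrow> P \<subseteq> M)"
    by (elim bchoice[THEN exE])
  define B where "B P = power_colon I (F P)" for P
  have not_in_t_maximal: "\<not> I \<union> \<Union>(B ` minimal_primes I) \<subseteq> M" if M: "is_t_maximal M" for M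
  proof
    assume sub: "I \<union> \<Union>(B ` minimal_primes I) \<subseteq> M"
    obtain P where P: "P \<in> minimal_primes I" "P \<subseteq> M"
      using ex_minimal_prime_below[OF t_maximal_imp_prime[OF M]] sub by blast
    have "\<not> B P \<subseteq> M"
      unfolding B_def using F P(1) by (intro PvMD_power_colon_not_subset_t_maximal[OF pvmd I M P]) auto
    with sub P show False
      by blast
  qed
  obtain Pf where Pf: "Pf \<subseteq> minimal_primes I" "finite Pf"
      "\<forall>M. is_t_maximal M \<longrightarrow> \<not> I \<union> \<Union>(B ` Pf) \<subseteq> M"
    using finite_subfamily_not_in_t_maximal[OF \<open>i \<in> I\<close> \<open>i \<noteq> 0\<close> not_in_t_maximal] by blast
  have "Q \<in> Pf" if Q: "Q \<in> minimal_primes I" for Q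
  proof -
    obtain M where M: "is_t_maximal M" "Q \<subseteq> M"
      using minimal_prime_subset_t_maximal[OF tI Q] by blast
    have "I \<subseteq> M"
      using Q M(2) unfolding minimal_primes_def by blast
    moreover have "B P \<subseteq> M" if P: "P \<in> Pf" "P \<noteq> Q" for P
      unfolding B_def
    proof (rule PvMD_power_colon_subset_t_maximal[OF pvmd M(1) _ Q M(2)])
      show "P \<in> minimal_primes I" "P \<noteq> Q"
        using P Pf(1) by auto
      show "F P \<subseteq> M \<Longrightarrow> P \<subseteq> M"
        using F \<open>P \<in> minimal_primes I\<close> M(1) by blast
    qed
    ultimately show "Q \<in> Pf"
      using Pf(3) M(1) by blast
  qed
  then have "minimal_primes I \<subseteq> Pf"
    by blast
  then show ?thesis
    using Pf(2) by (rule finite_subset)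
qed

end
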